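(* Let $\{\mathbf{x}_k\}_{k=0}^{K}$ be the sequence generated by the CG-BiO algorithm. Then for any $k\geq 0$, $f(\mathbf{x}_{k+1})\leq f(\mathbf{x}_k)-\gamma_k \mathcal{G}(\mathbf{x}_k) +\frac{1}{2}\gamma_k^2L_f D^2$ and $g(\mathbf{x}_{k+1})\leq (1-\gamma_k) g(\mathbf{x}_k)+\gamma_k g(\mathbf{x}_0) +\frac{1}{2}\gamma_k^2 L_g D^2$.
   Context: Consider the simple bilevel problem $\min_{\mathbf{x}\in\mathbb{R}^d} f(\mathbf{x})$ s.t. $\mathbf{x}\in \operatorname*{arg\,min}_{\mathbf{z}\in\mathcal{Z}} g(\mathbf{z})$. Assume: $\mathcal{Z}\subset\mathbb{R}^d$ is convex and compact with diameter $D$ in a norm $\|\cdot\|$ (dual norm $\|\cdot\|_*$); $g$ is convex and continuously differentiable on an open set containing $\mathcal{Z}$ with $L_g$-Lipschitz gradient on $\mathcal{Z}$; $f$ is continuously differentiable with $L_f$-Lipschitz gradient. Let $g^*=\min_{\mathbf{z}\in\mathcal{Z}}g(\mathbf{z})$ and $\mathcal{X}_g^*=\operatorname*{arg\,min}_{\mathbf{z}\in\mathcal{Z}}g(\mathbf{z})$. The CG-BiO algorithm: choose $\mathbf{x}_0\in\mathcal{Z}$ with $g(\mathbf{x}_0)-g^*\le \epsilon_g/2$; at iteration $k$, let $\mathcal{X}_k=\{\mathbf{s}\in\mathcal{Z}: \langle\nabla g(\mathbf{x}_k),\mathbf{s}-\mathbf{x}_k\rangle\le g(\mathbf{x}_0)-g(\mathbf{x}_k)\}$,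 compute $\mathbf{s}_k\in\operatorname*{arg\,min}_{\mathbf{s}\in\mathcal{X}_k}\langle\nabla f(\mathbf{x}_k),\mathbf{s}\rangle$ and set $\mathbf{x}_{k+1}=(1-\gamma_k)\mathbf{x}_k+\gamma_k\mathbf{s}_k$ with stepsize $\gamma_k\in[0,1]$. The Frank–Wolfe gap is $\mathcal{G}(\mathbf{x})=\max_{\mathbf{s}\in\mathcal{X}_g^*}\langle\nabla f(\mathbf{x}),\mathbf{x}-\mathbf{s}\rangle$. *)

theory Defs
  imports "HOL-Analysis.Analysis"
begin

text \<open>A general norm on a finite-dimensional real space (R^d is modelled by a euclidean_space type).\<close>
definition is_norm :: "('a::euclidean_space \<Rightarrow> real) \<Rightarrow> bool" where
  "is_norm N \<longleftrightarrow> (\<forall>x. 0 \<le> N x) \<and> (\<forall>x. N x = 0 \<longleftrightarrow> x = 0)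
     \<and> (\<forall>c x. N (c *\<^sub>R x) = \<bar>c\<bar> * N x) \<and> (\<forall>x y. N (x + y) \<le> N x + N y)"

definition dual_norm :: "('a::euclidean_space \<Rightarrow> real) \<Rightarrow> 'a \<Rightarrow> real" where
  "dual_norm N y = (SUP x\<in>{x. N x \<le> 1}. y \<bullet> x)"

definition diam_N :: "('a::euclidean_space \<Rightarrow> real) \<Rightarrow> 'a set \<Rightarrow> real" where
  "diam_N N Z = (SUP p\<in>Z \<times> Z. N (fst p - snd p))"

definition lower_opt :: "('a \<Rightarrow> real) \<Rightarrow> 'a set \<Rightarrow> real" where
  "lower_opt g Z = (INF z\<in>Z. g z)"

definition lower_sol :: "('a \<Rightarrow> real) \<Rightarrow> 'a set \<Rightarrow> 'a set" where
  "lower_sol g Z = {z\<in>Z. g z = lower_opt g Z}"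

definition fw_gap :: "('a::euclidean_space \<Rightarrow> 'a) \<Rightarrow> ('a \<Rightarrow> real) \<Rightarrow> 'a set \<Rightarrow> 'a \<Rightarrow> real" where
  "fw_gap grad_f g Z x = (SUP s\<in>lower_sol g Z. grad_f x \<bullet> (x - s))"

definition cut_set :: "('a::euclidean_space \<Rightarrow> real) \<Rightarrow> ('a \<Rightarrow> 'a) \<Rightarrow> 'a set \<Rightarrow> 'a \<Rightarrow> 'a \<Rightarrow> 'a set" where
  "cut_set g grad_g Z x0 xk = {s\<in>Z. grad_g xk \<bullet> (s - xk) \<le> g x0 - g xk}"

end

theory Submission
  imports Defs
begin

text \<open>Both inequalities are instances of one bound for a step \<open>x' = (1 - \<gamma>) x + \<gamma> s\<close> inside
  \<open>Z\<close>: the descent lemma for a gradient that is \<open>L\<close>-Lipschitz from \<open>N\<close> to its dual norm gives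
  \<open>F x' \<le> F x + \<gamma> \<langle>\<nabla>F x, s - x\<rangle> + \<gamma>\<^sup>2 L N(s - x)\<^sup>2 / 2\<close>, and \<open>N(s - x) \<le> D\<close>. For \<open>g\<close> the
  linear term is at most \<open>\<gamma> (g x\<^sub>0 - g x\<^sub>k)\<close> because \<open>s\<^sub>k\<close> lies in the cutting plane; for \<open>f\<close> it
  is at most \<open>-\<gamma> G(x\<^sub>k)\<close> because the cutting plane contains the whole lower-level solution set,
  over which \<open>s\<^sub>k\<close> does at least as well.\<close>

lemma is_norm_nonneg: "is_norm N \<Longrightarrow> 0 \<le> N x"
  and is_norm_eq_0: "is_norm N \<Longrightarrow> N x = 0 \<longleftrightarrow> x = 0"
  and is_norm_scaleR: "is_norm N \<Longrightarrow> N (c *\<^sub>R x) = \<bar>c\<bar> * N x"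
  and is_norm_triangle: "is_norm N \<Longrightarrow> N (x + y) \<le> N x + N y"
  unfolding is_norm_def by auto

lemma is_norm_zero: "is_norm N \<Longrightarrow> N 0 = 0"
  using is_norm_eq_0 by blast

lemma is_norm_pos: "is_norm N \<Longrightarrow> x \<noteq> 0 \<Longrightarrow> 0 < N x"
  using is_norm_nonneg is_norm_eq_0 by (metis order_le_less)

lemma is_norm_convex_on: "is_norm N \<Longrightarrow> convex_on UNIV N"
proof (rule convex_onI)
  fix t :: real and x y
  assume N: "is_norm N" and t: "0 < t" "t < 1"
  have "N ((1 - t) *\<^sub>R x + t *\<^sub>R y) \<le> N ((1 - t) *\<^sub>R x) + N (t *\<^sub>R y)"
    using is_norm_triangle[OF N] .
  also have "\<dots> = (1 - t) * N x + t * N y"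
    using is_norm_scaleR[OF N] t by simp
  finally show "N ((1 - t) *\<^sub>R x + t *\<^sub>R y) \<le> (1 - t) * N x + t * N y" .
qed simp

lemma is_norm_continuous_on: "is_norm N \<Longrightarrow> continuous_on S N"
  using convex_on_continuous[OF open_UNIV is_norm_convex_on] continuous_on_subset by blast

text \<open>Equivalence of norms in finite dimension, lower half: the minimum of \<open>N\<close> on the
  Euclidean unit sphere is positive.\<close>
lemma is_norm_ge_norm:
  fixes N :: "'a::euclidean_space \<Rightarrow> real"
  assumes N: "is_norm N"
  obtains c where "0 < c" "\<And>x. c * norm x \<le> N x"
proof -
  obtain b :: 'a where "b \<in> Basis"
    using nonempty_Basis by blast
  then have "sphere (0::'a) 1 \<noteq> {}"
    by (auto simp: norm_Basis)
  then obtain z where z: "z \<in> sphere 0 1" and min: "\<And>y. y \<in> sphere 0 1 \<Longrightarrow> N z \<le> N y"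
    using continuous_attains_inf[OF compact_sphere _ is_norm_continuous_on[OF N]] by blast
  have "0 < N z"
    using z is_norm_pos[OF N, of z] by fastforce
  moreover have "N z * norm x \<le> N x" for x
  proof (cases "x = 0")
    case False
    then have "N z \<le> N ((1 / norm x) *\<^sub>R x)"
      by (intro min) simp
    then show ?thesis
      using False by (simp add: is_norm_scaleR[OF N] field_simps)
  qed (simp add: is_norm_nonneg[OF N])
  ultimately show thesis
    using that by blast
qed

lemma bdd_above_inner_on_is_norm_ball:
  assumes N: "is_norm N"
  shows "bdd_above ((\<lambda>x. a \<bullet> x) ` {x. N x \<le> 1})"
proof -
  obtain c where c: "0 < c" "\<And>x. c * norm x \<le> N x"
    using is_norm_ge_norm[OF N] by blast
  show ?thesis
  proof (rule bdd_aboveI2)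
    fix x assume "x \<in> {x. N x \<le> 1}"
    then have "norm x \<le> 1 / c"
      using c order_trans[OF c(2)] by (simp add: field_simps)
    then have "norm a * norm x \<le> norm a * (1 / c)"
      by (rule mult_left_mono) simp
    then show "a \<bullet> x \<le> norm a * (1 / c)"
      by (meson Cauchy_Schwarz_ineq2 abs_le_D1 order_trans)
  qed
qed

lemma dual_norm_nonneg:
  assumes N: "is_norm N"
  shows "0 \<le> dual_norm N a"
proof -
  have "a \<bullet> 0 \<le> dual_norm N a"
    unfolding dual_norm_def
    by (intro cSUP_upper bdd_above_inner_on_is_norm_ball[OF N]) (simp add: is_norm_zero[OF N])
  then show ?thesis
    by simp
qed

lemma inner_le_dual_norm:
  assumes N: "is_norm N"
  shows "a \<bullet> v \<le> dual_norm N a * N v"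
proof (cases "v = 0")
  case True
  then show ?thesis
    by (simp add: is_norm_zero[OF N])
next
  case False
  then have "0 < N v"
    using is_norm_pos[OF N] by blast
  moreover have "a \<bullet> ((1 / N v) *\<^sub>R v) \<le> dual_norm N a"
    unfolding dual_norm_def using \<open>0 < N v\<close>
    by (intro cSUP_upper bdd_above_inner_on_is_norm_ball[OF N]) (simp add: is_norm_scaleR[OF N])
  ultimately show ?thesis
    by (simp add: field_simps)
qed

lemma le_diam_N:
  assumes N: "is_norm N" and "compact Z" "y \<in> Z" "z \<in> Z"
  shows "N (y - z) \<le> diam_N N Z"
proof -
  have "continuous_on (Z \<times> Z) (\<lambda>p. N (fst p - snd p))"
    by (rule continuous_on_compose2[OF is_norm_continuous_on[OF N]]) (auto intro!: continuous_intros)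
  then have "compact ((\<lambda>p. N (fst p - snd p)) ` (Z \<times> Z))"
    using assms(2) by (intro compact_continuous_image compact_Times)
  then have "bdd_above ((\<lambda>p. N (fst p - snd p)) ` (Z \<times> Z))"
    by (simp add: bounded_imp_bdd_above compact_imp_bounded)
  then show ?thesis
    unfolding diam_N_def using cSUP_upper[of "(y, z)" "Z \<times> Z"] assms(3,4) by force
qed

text \<open>A negative Lipschitz constant is only possible on a set with at most one point, whose
  diameter is \<open>0\<close>.\<close>
lemma lipschitz_mult_square_le_diam_N:
  assumes N: "is_norm N" and Z: "compact Z"
    and lip: "\<forall>y\<in>Z. \<forall>z\<in>Z. dual_norm N (G y - G z) \<le> L * N (y - z)"
    and y: "y \<in> Z" and z: "z \<in> Z"
  shows "L * (N (y - z))\<^sup>2 \<le> L * (diam_N N Z)\<^sup>2"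
proof (cases "0 \<le> L")
  case True
  then show ?thesis
    using le_diam_N[OF N Z y z] is_norm_nonneg[OF N]
    by (intro mult_left_mono power_mono) auto
next
  case False
  have "a = b" if "a \<in> Z" "b \<in> Z" for a b
  proof (rule ccontr)
    assume "a \<noteq> b"
    then have "L * N (a - b) < 0"
      using False is_norm_pos[OF N, of "a - b"] by (simp add: mult_neg_pos)
    then show False
      using lip that dual_norm_nonneg[OF N] by (meson leD order_trans)
  qed
  then have "Z \<times> Z = {(y, y)}"
    using y by blast
  then show ?thesis
    using y z \<open>\<And>a b. a \<in> Z \<Longrightarrow> b \<in> Z \<Longrightarrow> a = b\<close>[OF y z]
    by (simp add: diam_N_def is_norm_zero[OF N])
qed

lemma has_real_derivative_along_line:
  assumes "(F has_derivative (\<lambda>h. G \<bullet> h)) (at (x + t *\<^sub>R v))"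
  shows "((\<lambda>t. F (x + t *\<^sub>R v)) has_real_derivative G \<bullet> v) (at t)"
proof -
  have "((\<lambda>t. x + t *\<^sub>R v) has_derivative (\<lambda>h. h *\<^sub>R v)) (at t)"
    by (auto intro!: derivative_eq_intros)
  from has_derivative_compose[OF this assms]
  have "((\<lambda>t. F (x + t *\<^sub>R v)) has_derivative (\<lambda>h. G \<bullet> (h *\<^sub>R v))) (at t)"
    by (simp add: o_def)
  moreover have "(\<lambda>h. G \<bullet> (h *\<^sub>R v)) = (*) (G \<bullet> v)"
    by (auto simp: fun_eq_iff)
  ultimately show ?thesis
    unfolding has_field_derivative_def by simp
qed

text \<open>The descent lemma: \<open>t \<mapsto> F (x + t (y - x)) - t \<langle>G x, y - x\<rangle> - L t\<^sup>2 N(y - x)\<^sup>2 / 2\<close>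
  is nonincreasing on \<open>[0, 1]\<close>.\<close>
lemma descent_lemma:
  assumes N: "is_norm N"
    and deriv: "\<forall>z\<in>closed_segment x y. (F has_derivative (\<lambda>h. G z \<bullet> h)) (at z)"
    and lip: "\<forall>z\<in>closed_segment x y. dual_norm N (G z - G x) \<le> L * N (z - x)"
  shows "F y \<le> F x + G x \<bullet> (y - x) + L / 2 * (N (y - x))\<^sup>2"
proof -
  define v where "v = y - x"
  define \<phi> where "\<phi> t = F (x + t *\<^sub>R v) - t * (G x \<bullet> v) - L / 2 * t\<^sup>2 * (N v)\<^sup>2" for t
  have "\<phi> 1 \<le> \<phi> 0"
  proof (rule DERIV_nonpos_imp_nonincreasing[of 0 1 \<phi>])
    fix t :: real
    assume t: "0 \<le> t" "t \<le> 1"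
    let ?z = "x + t *\<^sub>R v"
    have z: "?z \<in> closed_segment x y"
      using t unfolding v_def closed_segment_def
      by (intro CollectI exI[of _ t]) (simp add: algebra_simps)
    have "((\<lambda>t. F (x + t *\<^sub>R v)) has_real_derivative G ?z \<bullet> v) (at t)"
      using deriv z by (intro has_real_derivative_along_line) blast
    then have "(\<phi> has_real_derivative G ?z \<bullet> v - G x \<bullet> v - L * t * (N v)\<^sup>2) (at t)"
      unfolding \<phi>_def by (auto intro!: derivative_eq_intros)
    moreover have "G ?z \<bullet> v - G x \<bullet> v \<le> L * t * (N v)\<^sup>2"
    proof -
      have "G ?z \<bullet> v - G x \<bullet> v \<le> dual_norm N (G ?z - G x) * N v"
        using inner_le_dual_norm[OF N, of "G ?z - G x" v] by (simp add: inner_diff_left)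
      also have "\<dots> \<le> L * N (t *\<^sub>R v) * N v"
        using bspec[OF lip z] is_norm_nonneg[OF N, of v] by (simp add: mult_right_mono)
      also have "\<dots> = L * t * (N v)\<^sup>2"
        using t by (simp add: is_norm_scaleR[OF N] power2_eq_square)
      finally show ?thesis .
    qed
    ultimately show "\<exists>d. (\<phi> has_real_derivative d) (at t) \<and> d \<le> 0"
      by fastforce
  qed simp
  then show ?thesis
    unfolding \<phi>_def v_def by simp
qed

lemma conditional_gradient_step_bound:
  assumes N: "is_norm N" and Z: "convex Z" "compact Z"
    and deriv: "\<forall>y\<in>Z. (F has_derivative (\<lambda>h. G y \<bullet> h)) (at y)"
    and lip: "\<forall>y\<in>Z. \<forall>z\<in>Z. dual_norm N (G y - G z) \<le> L * N (y - z)"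
    and x: "x \<in> Z" and s: "s \<in> Z" and \<gamma>: "0 \<le> \<gamma>" "\<gamma> \<le> 1"
  shows "F ((1 - \<gamma>) *\<^sub>R x + \<gamma> *\<^sub>R s)
           \<le> F x + \<gamma> * (G x \<bullet> (s - x)) + 1/2 * \<gamma>\<^sup>2 * L * (diam_N N Z)\<^sup>2"
proof -
  define y where "y = (1 - \<gamma>) *\<^sub>R x + \<gamma> *\<^sub>R s"
  have y_minus_x: "y - x = \<gamma> *\<^sub>R (s - x)"
    unfolding y_def by (simp add: algebra_simps)
  have "y \<in> Z"
    unfolding y_def using Z(1) x s \<gamma> by (simp add: convex_def)
  then have seg: "closed_segment x y \<subseteq> Z"
    using closed_segment_subset[OF x _ Z(1)] by blast
  have "F y \<le> F x + G x \<bullet> (y - x) + L / 2 * (N (y - x))\<^sup>2"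
    using seg x deriv lip by (intro descent_lemma[OF N]) auto
  also have "\<dots> = F x + \<gamma> * (G x \<bullet> (s - x)) + 1/2 * \<gamma>\<^sup>2 * (L * (N (s - x))\<^sup>2)"
    using \<gamma> by (simp add: y_minus_x is_norm_scaleR[OF N] power_mult_distrib)
  also have "\<dots> \<le> F x + \<gamma> * (G x \<bullet> (s - x)) + 1/2 * \<gamma>\<^sup>2 * (L * (diam_N N Z)\<^sup>2)"
    using lipschitz_mult_square_le_diam_N[OF N Z(2) lip s x] by (simp add: mult_left_mono)
  finally show ?thesis
    unfolding y_def by simp
qed

lemma convex_on_imp_above_tangent_plane:
  fixes g :: "'a::real_inner \<Rightarrow> real"
  assumes convex: "convex_on Z g" and x: "x \<in> Z" and s: "s \<in> Z"
    and deriv: "(g has_derivative (\<lambda>h. G \<bullet> h)) (at x)"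
  shows "g x + G \<bullet> (s - x) \<le> g s"
proof -
  define v where "v = s - x"
  have "((\<lambda>t. g (x + t *\<^sub>R v)) has_real_derivative G \<bullet> v) (at 0)"
    using deriv by (intro has_real_derivative_along_line) simp
  then have "((\<lambda>t. g (x + t *\<^sub>R v)) has_real_derivative G \<bullet> v) (at_right 0)"
    by (rule has_field_derivative_at_within)
  then have lim: "((\<lambda>t. (g (x + t *\<^sub>R v) - g x) / t) \<longlongrightarrow> G \<bullet> v) (at_right 0)"
    unfolding has_field_derivative_iff by simp
  have "eventually (\<lambda>t. t \<in> {0<..<1}) (at_right (0::real))"
    by (rule eventually_at_right_real) simp
  then have "eventually (\<lambda>t. (g (x + t *\<^sub>R v) - g x) / t \<le> g s - g x) (at_right 0)"
  proof eventually_elim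
    case (elim t)
    have "x + t *\<^sub>R v = (1 - t) *\<^sub>R x + t *\<^sub>R s"
      by (simp add: v_def algebra_simps)
    then have "g (x + t *\<^sub>R v) \<le> (1 - t) * g x + t * g s"
      using convex_onD[OF convex, of t x s] elim x s by simp
    then have "g (x + t *\<^sub>R v) - g x \<le> t * (g s - g x)"
      by (simp add: algebra_simps)
    then show ?case
      using elim by (simp add: field_simps)
  qed
  then have "G \<bullet> v \<le> g s - g x"
    by (rule tendsto_upperbound[OF lim]) simp
  then show ?thesis
    unfolding v_def by simp
qed

lemma lower_sol_eq_minimizers:
  assumes "compact Z" "continuous_on Z g"
  shows "lower_sol g Z = {z\<in>Z. \<forall>y\<in>Z. g z \<le> g y}"
proof -
  have bdd: "bdd_below (g ` Z)"
    using assms by (simp add: bounded_imp_bdd_below compact_imp_bounded compact_continuous_image)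
  have "g z = lower_opt g Z \<longleftrightarrow> (\<forall>y\<in>Z. g z \<le> g y)" if "z \<in> Z" for z
    unfolding lower_opt_def using that
    by (metis antisym cINF_greatest cINF_lower[OF bdd] empty_iff)
  then show ?thesis
    unfolding lower_sol_def by blast
qed

lemma lower_sol_nonempty:
  assumes "compact Z" "continuous_on Z g" "Z \<noteq> {}"
  shows "lower_sol g Z \<noteq> {}"
  using continuous_attains_inf[OF assms(1,3,2)] lower_sol_eq_minimizers[OF assms(1,2)] by blast

text \<open>The cutting plane at \<open>x\<^sub>k\<close> never removes a lower-level solution: it only discards points
  whose linearisation of \<open>g\<close> already exceeds \<open>g x\<^sub>0 \<ge> g\<^sup>*\<close>.\<close>
lemma lower_sol_subset_cut_set:
  assumes Z: "compact Z" "continuous_on Z g" and convex: "convex_on Z g"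
    and x0: "x0 \<in> Z" and xk: "xk \<in> Z"
    and deriv: "(g has_derivative (\<lambda>h. grad_g xk \<bullet> h)) (at xk)"
  shows "lower_sol g Z \<subseteq> cut_set g grad_g Z x0 xk"
proof
  fix z
  assume "z \<in> lower_sol g Z"
  then have z: "z \<in> Z" "g z \<le> g x0"
    using lower_sol_eq_minimizers[OF Z] x0 by auto
  have "g xk + grad_g xk \<bullet> (z - xk) \<le> g z"
    by (rule convex_on_imp_above_tangent_plane[OF convex xk z(1) deriv])
  then show "z \<in> cut_set g grad_g Z x0 xk"
    unfolding cut_set_def using z by simp
qed

lemma fw_gap_le_inner_cut_set_arg_min:
  assumes Z: "compact Z" "continuous_on Z g" and convex: "convex_on Z g"
    and x0: "x0 \<in> Z" and xk: "xk \<in> Z"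
    and deriv: "(g has_derivative (\<lambda>h. grad_g xk \<bullet> h)) (at xk)"
    and s: "is_arg_min (\<lambda>v. grad_f xk \<bullet> v) (\<lambda>v. v \<in> cut_set g grad_g Z x0 xk) s"
  shows "fw_gap grad_f g Z xk \<le> grad_f xk \<bullet> (xk - s)"
  unfolding fw_gap_def
proof (rule cSUP_least)
  show "lower_sol g Z \<noteq> {}"
    using lower_sol_nonempty[OF Z] x0 by blast
next
  fix z
  assume "z \<in> lower_sol g Z"
  then have "z \<in> cut_set g grad_g Z x0 xk"
    using lower_sol_subset_cut_set[where grad_g = grad_g, OF Z convex x0 xk deriv] by blast
  then have "grad_f xk \<bullet> s \<le> grad_f xk \<bullet> z"
    using s unfolding is_arg_min_def by (auto simp: not_less)
  then show "grad_f xk \<bullet> (xk - z) \<le> grad_f xk \<bullet> (xk - s)"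
    by (simp add: inner_diff_right)
qed

lemma convex_combination_iterates_in:
  assumes "convex Z" "x 0 \<in> Z" "\<forall>j<K. s j \<in> Z"
    and "\<forall>j<K. 0 \<le> \<gamma> j \<and> \<gamma> j \<le> 1 \<and> x (Suc j) = (1 - \<gamma> j) *\<^sub>R x j + \<gamma> j *\<^sub>R s j"
  shows "j \<le> K \<Longrightarrow> x j \<in> Z"
proof (induction j)
  case (Suc j)
  then show ?case
    using assms by (simp add: convex_def)
qed (use assms in simp)

theorem lemma2:
  fixes N :: "'a::euclidean_space \<Rightarrow> real"
    and f g :: "'a \<Rightarrow> real" and grad_f grad_g :: "'a \<Rightarrow> 'a"
    and Z U :: "'a set" and D L_f L_g \<epsilon>_g :: real
    and x s :: "nat \<Rightarrow> 'a" and \<gamma> :: "nat \<Rightarrow> real" and K k :: nat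
  assumes norm: "is_norm N"
    and Z: "convex Z" "compact Z" and D: "D = diam_N N Z"
    and U: "open U" "Z \<subseteq> U"
    and g_deriv: "\<forall>y\<in>U. (g has_derivative (\<lambda>h. grad_g y \<bullet> h)) (at y)"
    and g_cont: "continuous_on U grad_g"
    and g_convex: "convex_on Z g"
    and g_lip: "\<forall>y\<in>Z. \<forall>z\<in>Z. dual_norm N (grad_g y - grad_g z) \<le> L_g * N (y - z)"
    and f_deriv: "\<forall>y. (f has_derivative (\<lambda>h. grad_f y \<bullet> h)) (at y)"
    and f_cont: "continuous_on UNIV grad_f"
    and f_lip: "\<forall>y z. dual_norm N (grad_f y - grad_f z) \<le> L_f * N (y - z)"
    and x0: "x 0 \<in> Z" "g (x 0) - lower_opt g Z \<le> \<epsilon>_g / 2"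
    and s_def: "\<forall>j<K. is_arg_min (\<lambda>v. grad_f (x j) \<bullet> v) (\<lambda>v. v \<in> cut_set g grad_g Z (x 0) (x j)) (s j)"
    and step: "\<forall>j<K. 0 \<le> \<gamma> j \<and> \<gamma> j \<le> 1 \<and> x (Suc j) = (1 - \<gamma> j) *\<^sub>R x j + \<gamma> j *\<^sub>R s j"
    and k: "k < K"
  shows "f (x (Suc k)) \<le> f (x k) - \<gamma> k * fw_gap grad_f g Z (x k) + 1/2 * (\<gamma> k)\<^sup>2 * L_f * D\<^sup>2
       \<and> g (x (Suc k)) \<le> (1 - \<gamma> k) * g (x k) + \<gamma> k * g (x 0) + 1/2 * (\<gamma> k)\<^sup>2 * L_g * D\<^sup>2"
proof -
  have s_cut: "s k \<in> cut_set g grad_g Z (x 0) (x k)"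
    and s_min: "is_arg_min (\<lambda>v. grad_f (x k) \<bullet> v) (\<lambda>v. v \<in> cut_set g grad_g Z (x 0) (x k)) (s k)"
    using s_def k by (auto simp: is_arg_min_def)
  have s_Z: "s k \<in> Z" and s_below: "grad_g (x k) \<bullet> (s k - x k) \<le> g (x 0) - g (x k)"
    using s_cut by (auto simp: cut_set_def)
  have "\<forall>j<K. s j \<in> Z"
    using s_def by (auto simp: is_arg_min_def cut_set_def)
  then have x_Z: "x k \<in> Z"
    using convex_combination_iterates_in[OF Z(1) x0(1) _ step] k by simp
  have \<gamma>: "0 \<le> \<gamma> k" "\<gamma> k \<le> 1" and x_next: "x (Suc k) = (1 - \<gamma> k) *\<^sub>R x k + \<gamma> k *\<^sub>R s k"
    using step k by auto
  have g_deriv_Z: "\<forall>y\<in>Z. (g has_derivative (\<lambda>h. grad_g y \<bullet> h)) (at y)"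
    using g_deriv U(2) by blast
  then have "continuous_on Z g"
    by (intro continuous_at_imp_continuous_on) (auto dest: has_derivative_continuous)
  then have "fw_gap grad_f g Z (x k) \<le> grad_f (x k) \<bullet> (x k - s k)"
    using fw_gap_le_inner_cut_set_arg_min[where grad_f = grad_f and grad_g = grad_g,
        OF Z(2) _ g_convex x0(1) x_Z _ s_min] g_deriv_Z x_Z
    by blast
  then have "\<gamma> k * fw_gap grad_f g Z (x k) \<le> \<gamma> k * (grad_f (x k) \<bullet> (x k - s k))"
    using \<gamma> by (simp add: mult_left_mono)
  moreover have "\<gamma> k * (grad_g (x k) \<bullet> (s k - x k)) \<le> \<gamma> k * (g (x 0) - g (x k))"
    using \<gamma> s_below by (simp add: mult_left_mono)
  moreover have "f (x (Suc k)) \<le> f (x k) + \<gamma> k * (grad_f (x k) \<bullet> (s k - x k)) + 1/2 * (\<gamma> k)\<^sup>2 * L_f * D\<^sup>2"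
    unfolding x_next D using f_deriv f_lip x_Z s_Z \<gamma>
    by (intro conditional_gradient_step_bound[OF norm Z]) auto
  moreover have "g (x (Suc k)) \<le> g (x k) + \<gamma> k * (grad_g (x k) \<bullet> (s k - x k)) + 1/2 * (\<gamma> k)\<^sup>2 * L_g * D\<^sup>2"
    unfolding x_next D using g_deriv_Z g_lip x_Z s_Z \<gamma>
    by (intro conditional_gradient_step_bound[OF norm Z])
  ultimately show ?thesis
    by (simp add: algebra_simps inner_diff_right)
qed

end
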